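(* Let $G$ be a bipartite permutation graph with a transitive vertex ordering $<$. Let $M=\{e_1,e_2,\ldots,e_t\}$ be a matching in $G$ where $l(e_1)<l(e_2)<\cdots<l(e_t)$. Then $M$ is uniquely restricted if and only if $\{e_i,e_{i+1}\}$ is a uniquely restricted matching in $G$ for each $i\in\{1,2,\ldots,t-1\}$.
   Context: Graphs are finite, simple, undirected. A permutation graph is a graph isomorphic to some $G_\pi$, where for a permutation $\pi$ of $\{1,\dots,n\}$, $G_\pi$ has vertex set $\{1,\dots,n\}$ and edges $ij$ with $(i-j)(\pi(i)-\pi(j))<0$; a bipartite permutation graph is a permutation graph that is bipartite. An ordering $<$ of $V(G)$ is a transitive vertex ordering if for all $u<v<w$: (a) $uv,vw\in E(G)$ implies $uw\in E(G)$, and (b) $uw\in E(G)$ implies $uv\in E(G)$ or $vw\in E(G)$. For an edge $e=uv$, $l(e)=\min_<\{u,v\}$ and $r(e)=\max_<\{u,v\}$. A matching is a set of pairwise vertex-disjoint edges; it is uniquely restricted if no other matching of $G$ matches exactly the same vertex set. *)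

theory Defs
  imports "HOL-Combinatorics.Permutations"
begin

definition simple_graph :: "'a set \<Rightarrow> 'a set set \<Rightarrow> bool" where
  "simple_graph V E \<longleftrightarrow> finite V \<and>
     (\<forall>e\<in>E. \<exists>u v. e = {u, v} \<and> u \<noteq> v \<and> u \<in> V \<and> v \<in> V)"

definition perm_graph_edges :: "nat \<Rightarrow> (nat \<Rightarrow> nat) \<Rightarrow> nat set set" where
  "perm_graph_edges n \<pi> = {{i, j} | i j. i \<in> {1..n} \<and> j \<in> {1..n} \<and>
       (int i - int j) * (int (\<pi> i) - int (\<pi> j)) < 0}"

definition permutation_graph :: "'a set \<Rightarrow> 'a set set \<Rightarrow> bool" where
  "permutation_graph V E \<longleftrightarrow> (\<exists>n \<pi> f. \<pi> permutes {1..n} \<and> bij_betw f V {1..n} \<and>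
       (\<forall>u\<in>V. \<forall>v\<in>V. {u, v} \<in> E \<longleftrightarrow> {f u, f v} \<in> perm_graph_edges n \<pi>))"

definition bipartite :: "'a set \<Rightarrow> 'a set set \<Rightarrow> bool" where
  "bipartite V E \<longleftrightarrow> (\<exists>A B. A \<union> B = V \<and> A \<inter> B = {} \<and>
       (\<forall>e\<in>E. card (e \<inter> A) = 1 \<and> card (e \<inter> B) = 1))"

definition bipartite_permutation_graph :: "'a set \<Rightarrow> 'a set set \<Rightarrow> bool" where
  "bipartite_permutation_graph V E \<longleftrightarrow> simple_graph V E \<and> permutation_graph V E \<and> bipartite V E"

text \<open>A transitive vertex ordering, given as a strict linear order r on V ((u,v) \<in> r means u < v).\<close>
definition transitive_vertex_ordering :: "'a set \<Rightarrow> 'a set set \<Rightarrow> 'a rel \<Rightarrow> bool" where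
  "transitive_vertex_ordering V E r \<longleftrightarrow> strict_linear_order_on V r \<and> r \<subseteq> V \<times> V \<and>
     (\<forall>u\<in>V. \<forall>v\<in>V. \<forall>w\<in>V. (u, v) \<in> r \<and> (v, w) \<in> r \<longrightarrow>
        ({u, v} \<in> E \<and> {v, w} \<in> E \<longrightarrow> {u, w} \<in> E) \<and>
        ({u, w} \<in> E \<longrightarrow> {u, v} \<in> E \<or> {v, w} \<in> E))"

definition lft :: "'a rel \<Rightarrow> 'a set \<Rightarrow> 'a" where
  "lft r e = (THE u. u \<in> e \<and> (\<forall>v\<in>e. v \<noteq> u \<longrightarrow> (u, v) \<in> r))"

definition matching :: "'a set set \<Rightarrow> 'a set set \<Rightarrow> bool" where
  "matching E M \<longleftrightarrow> M \<subseteq> E \<and> (\<forall>e\<in>M. \<forall>f\<in>M. e \<noteq> f \<longrightarrow> e \<inter> f = {})"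

definition uniquely_restricted :: "'a set set \<Rightarrow> 'a set set \<Rightarrow> bool" where
  "uniquely_restricted E M \<longleftrightarrow> matching E M \<and>
     (\<forall>M'. matching E M' \<and> \<Union>M' = \<Union>M \<longrightarrow> M' = M)"

end

theory Submission
  imports Defs
begin

text \<open>In a bipartite graph, condition (a) of a transitive vertex ordering forbids paths
  \<open>u < v < w\<close>, so each vertex has all its neighbours on one side; condition (b) then forces an
  edge \<open>uw\<close> to reach every vertex between \<open>u\<close> and \<open>w\<close> from the appropriate end. Suppose \<open>M\<close> is
  not uniquely restricted, witnessed by \<open>M'\<close>, and let \<open>e\<^sub>k\<close> be the first edge of \<open>M\<close> missing
  from \<open>M'\<close>. The \<open>M'\<close>-partners of \<open>l(e\<^sub>k)\<close> and \<open>r(e\<^sub>k)\<close> are ends of later edges, giving edges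
  that cross between \<open>e\<^sub>k\<close> and later matching edges. Pushing such a crossing inwards along
  the ordering ends at two consecutive edges \<open>e\<^sub>c, e\<^sub>c\<^sub>+\<^sub>1\<close> joined by both
  \<open>l(e\<^sub>c) r(e\<^sub>c\<^sub>+\<^sub>1)\<close> and \<open>l(e\<^sub>c\<^sub>+\<^sub>1) r(e\<^sub>c)\<close>, so \<open>{e\<^sub>c, e\<^sub>c\<^sub>+\<^sub>1}\<close> is not uniquely restricted.\<close>

lemma bipartite_edge_crosses:
  assumes "A \<inter> B = {}" "card ({a, b} \<inter> A) = 1" "card ({a, b} \<inter> B) = 1"
  shows "a \<in> A \<longleftrightarrow> b \<notin> A"
  using assms
  by (cases "a \<in> A"; cases "b \<in> A"; cases "a = b") (auto simp: Int_insert_left split: if_splits)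

lemma bipartite_no_triangle:
  assumes "bipartite V E" "{x, y} \<in> E" "{y, z} \<in> E"
  shows "{x, z} \<notin> E"
proof
  assume "{x, z} \<in> E"
  obtain A B where AB: "A \<inter> B = {}"
    and sides: "\<forall>e\<in>E. card (e \<inter> A) = 1 \<and> card (e \<inter> B) = 1"
    using assms(1) unfolding bipartite_def by blast
  have "a \<in> A \<longleftrightarrow> b \<notin> A" if "{a, b} \<in> E" for a b
    using bipartite_edge_crosses[OF AB] sides that by blast
  then have "x \<in> A \<longleftrightarrow> y \<notin> A" "y \<in> A \<longleftrightarrow> z \<notin> A" "x \<in> A \<longleftrightarrow> z \<notin> A"
    using assms(2,3) \<open>{x, z} \<in> E\<close> by blast+
  then show False by blast
qed

lemma matching_edges: "matching E M \<Longrightarrow> M \<subseteq> E"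
  unfolding matching_def by simp

lemma matching_disjoint: "matching E M \<Longrightarrow> e \<in> M \<Longrightarrow> f \<in> M \<Longrightarrow> e \<noteq> f \<Longrightarrow> e \<inter> f = {}"
  unfolding matching_def by simp

lemma matching_subset: "matching E M \<Longrightarrow> P \<subseteq> M \<Longrightarrow> matching E P"
  unfolding matching_def by (meson subset_trans subsetD)

lemma matching_Un:
  assumes "matching E M" "matching E N" "\<Union>M \<inter> \<Union>N = {}"
  shows "matching E (M \<union> N)"
  unfolding matching_def
proof (intro conjI ballI impI)
  show "M \<union> N \<subseteq> E" using matching_edges[OF assms(1)] matching_edges[OF assms(2)] by simp
next
  fix e f assume ef: "e \<in> M \<union> N" "f \<in> M \<union> N" "e \<noteq> f"
  have cross: "e \<inter> f = {}" if "e \<in> M" "f \<in> N" for e f using assms(3) that by blast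
  from ef consider "e \<in> M" "f \<in> M" | "e \<in> N" "f \<in> N" | "e \<in> M" "f \<in> N" | "f \<in> M" "e \<in> N"
    by blast
  then show "e \<inter> f = {}"
    using cross[of e f] cross[of f e] matching_disjoint[OF assms(1), of e f]
      matching_disjoint[OF assms(2), of e f] ef(3)
    by cases (simp_all add: Int_commute)
qed

lemma matching_eq_if_subset:
  assumes M': "matching E M'" and "{} \<notin> E" "M \<subseteq> M'" "\<Union>M' = \<Union>M"
  shows "M' = M"
proof (intro equalityI subsetI)
  fix f assume f: "f \<in> M'"
  then have "f \<noteq> {}" using matching_edges[OF M'] \<open>{} \<notin> E\<close> by auto
  then obtain x where "x \<in> f" by auto
  then obtain e where e: "e \<in> M" "x \<in> e" using f assms(4) by auto
  then have "e = f" using matching_disjoint[OF M' _ f] \<open>x \<in> f\<close> \<open>M \<subseteq> M'\<close> by auto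
  then show "f \<in> M" using e by simp
qed (use assms(3) in auto)

lemma uniquely_restrictedD:
  "uniquely_restricted E M \<Longrightarrow> matching E M' \<Longrightarrow> \<Union>M' = \<Union>M \<Longrightarrow> M' = M"
  unfolding uniquely_restricted_def by simp

lemma uniquely_restricted_subset:
  assumes ur: "uniquely_restricted E M" and "{} \<notin> E" and "P \<subseteq> M"
  shows "uniquely_restricted E P"
proof -
  have M: "matching E M" using ur unfolding uniquely_restricted_def by simp
  have "M' = P" if M': "matching E M'" and U: "\<Union>M' = \<Union>P" for M'
  proof -
    have "\<Union>P \<inter> \<Union>(M - P) = {}"
      using matching_disjoint[OF M] \<open>P \<subseteq> M\<close> by fastforce
    then have "matching E (M' \<union> (M - P))"
      using matching_Un[OF M' matching_subset[OF M]] U by simp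
    moreover have "\<Union>(M' \<union> (M - P)) = \<Union>M" using U \<open>P \<subseteq> M\<close> by auto
    ultimately have "M' \<union> (M - P) = M" by (rule uniquely_restrictedD[OF ur])
    then have "P \<subseteq> M'" using \<open>P \<subseteq> M\<close> by blast
    then show "M' = P" using matching_eq_if_subset[OF M' \<open>{} \<notin> E\<close> _ U] by simp
  qed
  then show ?thesis using matching_subset[OF M \<open>P \<subseteq> M\<close>] unfolding uniquely_restricted_def by simp
qed

locale ordered_bipartite_graph =
  fixes V :: "'a set" and E :: "'a set set" and r :: "'a rel"
  assumes simple: "simple_graph V E"
    and bipartite: "bipartite V E"
    and ordering: "transitive_vertex_ordering V E r"
begin

lemma r_trans: "(x, y) \<in> r \<Longrightarrow> (y, z) \<in> r \<Longrightarrow> (x, z) \<in> r"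
  using ordering unfolding transitive_vertex_ordering_def strict_linear_order_on_def trans_def
  by blast

lemma r_irrefl: "(x, x) \<notin> r"
  using ordering unfolding transitive_vertex_ordering_def strict_linear_order_on_def irrefl_def
  by blast

lemma r_total: "x \<in> V \<Longrightarrow> y \<in> V \<Longrightarrow> x \<noteq> y \<Longrightarrow> (x, y) \<in> r \<or> (y, x) \<in> r"
  using ordering unfolding transitive_vertex_ordering_def strict_linear_order_on_def total_on_def
  by blast

lemma r_field: "(x, y) \<in> r \<Longrightarrow> x \<in> V \<and> y \<in> V"
  using ordering unfolding transitive_vertex_ordering_def by blast

lemma edge_doubleton: "e \<in> E \<Longrightarrow> \<exists>u v. e = {u, v} \<and> u \<noteq> v \<and> u \<in> V \<and> v \<in> V"
  using simple unfolding simple_graph_def by blast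

lemma empty_not_edge: "{} \<notin> E"
  using edge_doubleton by blast

lemma edge_vertices: "{u, v} \<in> E \<Longrightarrow> u \<in> V \<and> v \<in> V \<and> u \<noteq> v"
  using edge_doubleton by (metis doubleton_eq_iff)

lemma no_monotone_path:
  assumes "(u, v) \<in> r" "(v, w) \<in> r" "{u, v} \<in> E"
  shows "{v, w} \<notin> E"
proof
  assume "{v, w} \<in> E"
  moreover have "u \<in> V" "v \<in> V" "w \<in> V" using r_field assms(1,2) by auto
  ultimately have "{u, w} \<in> E"
    using ordering assms unfolding transitive_vertex_ordering_def by blast
  then show False using bipartite_no_triangle[OF bipartite assms(3) \<open>{v, w} \<in> E\<close>] by blast
qed

lemma edge_splits:
  assumes "(u, v) \<in> r" "(v, w) \<in> r" "{u, w} \<in> E"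
  shows "{u, v} \<in> E \<or> {v, w} \<in> E"
proof -
  have "u \<in> V" "v \<in> V" "w \<in> V" using r_field assms(1,2) by auto
  then show ?thesis using ordering assms unfolding transitive_vertex_ordering_def by blast
qed

lemma edge_splits_right:
  assumes "(a, b) \<in> r" "(b, c) \<in> r" "{a, c} \<in> E" "(b, d) \<in> r" "{b, d} \<in> E"
  shows "{b, c} \<in> E"
  using edge_splits[OF assms(1-3)] no_monotone_path[OF assms(1,4)] assms(5) by blast

lemma edge_splits_left:
  assumes "(a, b) \<in> r" "(b, c) \<in> r" "{a, c} \<in> E" "(d, b) \<in> r" "{d, b} \<in> E"
  shows "{a, b} \<in> E"
  using edge_splits[OF assms(1-3)] no_monotone_path[OF assms(4,2,5)] by blast

lemma neighbour_left:
  assumes "(v, u) \<in> r" "{v, u} \<in> E" "{x, u} \<in> E"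
  shows "(x, u) \<in> r"
  using no_monotone_path[of v u x] r_total[of u x] edge_vertices[OF assms(3)] assms
  by (auto simp: insert_commute)

lemma lft_doubleton:
  assumes "(u, v) \<in> r"
  shows "lft r {u, v} = u"
  unfolding lft_def
proof (rule the_equality)
  show "u \<in> {u, v} \<and> (\<forall>w\<in>{u, v}. w \<noteq> u \<longrightarrow> (u, w) \<in> r)" using assms by simp
next
  fix w assume "w \<in> {u, v} \<and> (\<forall>x\<in>{u, v}. x \<noteq> w \<longrightarrow> (w, x) \<in> r)"
  then have "w = u \<or> (v, u) \<in> r" by auto
  then show "w = u" using r_trans[OF assms] r_irrefl by blast
qed

end

locale sorted_matching = ordered_bipartite_graph +
  fixes es :: "'a set list"
  assumes matching: "matching E (set es)"
    and sorted: "sorted_wrt (\<lambda>e f. (lft r e, lft r f) \<in> r) es"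
begin

definition L :: "nat \<Rightarrow> 'a" where "L i = lft r (es ! i)"

definition R :: "nat \<Rightarrow> 'a" where "R i = the_elem (es ! i - {L i})"

lemma es_edge: "i < length es \<Longrightarrow> es ! i \<in> E"
  using matching unfolding matching_def by auto

lemma es_ends:
  assumes "i < length es"
  shows "es ! i = {L i, R i}" and "(L i, R i) \<in> r"
proof -
  obtain u v where uv: "es ! i = {u, v}" "(u, v) \<in> r"
    using edge_doubleton[OF es_edge[OF assms]] r_total by (metis insert_commute)
  moreover have "u \<noteq> v" using uv(2) r_irrefl by blast
  ultimately have "L i = u" "R i = v" using lft_doubleton unfolding L_def R_def by auto
  then show "es ! i = {L i, R i}" "(L i, R i) \<in> r" using uv by auto
qed

lemma es_edge_ends: "i < length es \<Longrightarrow> {L i, R i} \<in> E"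
  using es_edge es_ends by metis

lemma L_mono: "i < j \<Longrightarrow> j < length es \<Longrightarrow> (L i, L j) \<in> r"
  using sorted unfolding sorted_wrt_iff_nth_less L_def by auto

lemma es_disjoint:
  assumes "i < length es" "j < length es" "i \<noteq> j"
  shows "es ! i \<inter> es ! j = {}"
proof -
  have "L i \<noteq> L j" using L_mono assms r_irrefl by (metis linorder_neqE_nat)
  then have "es ! i \<noteq> es ! j" unfolding L_def by metis
  then show ?thesis using matching assms unfolding matching_def by auto
qed

lemma L_ne_R: "i < length es \<Longrightarrow> j < length es \<Longrightarrow> L i \<noteq> R j"
  using es_disjoint[of i j] es_ends[of i] es_ends[of j] r_irrefl by (cases "i = j") auto

lemma no_edge_L_L:
  assumes "i < length es" "j < length es"
  shows "{L i, L j} \<notin> E"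
proof
  assume LL: "{L i, L j} \<in> E"
  then have "i \<noteq> j" using edge_vertices by blast
  then consider "i < j" | "j < i" by linarith
  then show False
  proof cases
    case 1
    then show False using no_monotone_path[OF L_mono es_ends(2) LL] es_edge_ends assms by blast
  next
    case 2
    then show False
      using no_monotone_path[OF L_mono es_ends(2)] LL es_edge_ends assms by (metis insert_commute)
  qed
qed

lemma no_edge_R_R:
  assumes "i < length es" "j < length es"
  shows "{R i, R j} \<notin> E"
proof
  assume RR: "{R i, R j} \<in> E"
  then have "R i \<in> V" "R j \<in> V" "R i \<noteq> R j" using edge_vertices by auto
  then consider "(R i, R j) \<in> r" | "(R j, R i) \<in> r" using r_total by blast
  then show False
  proof cases
    case 1
    then show False using no_monotone_path[OF es_ends(2) 1] RR es_edge_ends assms by blast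
  next
    case 2
    then show False
      using no_monotone_path[OF es_ends(2) 2] RR es_edge_ends assms by (metis insert_commute)
  qed
qed

lemma L_less_R_if_edge:
  "i < length es \<Longrightarrow> j < length es \<Longrightarrow> {L j, R i} \<in> E \<Longrightarrow> (L j, R i) \<in> r"
  using neighbour_left[OF es_ends(2) es_edge_ends] by blast

definition crossing :: "nat \<Rightarrow> nat \<Rightarrow> bool" where
  "crossing i j \<longleftrightarrow> {L i, R j} \<in> E \<and> {L j, R i} \<in> E"

lemma crossing_not_uniquely_restricted:
  assumes "i < j" "j < length es" "crossing i j"
  shows "\<not> uniquely_restricted E {es ! i, es ! j}"
proof
  assume ur: "uniquely_restricted E {es ! i, es ! j}"
  let ?N = "{{L i, R j}, {L j, R i}}"
  have i: "i < length es" using assms by simp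
  have ends_distinct:
      "L i \<noteq> L j" "R i \<noteq> R j" "L i \<noteq> R j" "L j \<noteq> R i" "L i \<noteq> R i" "L j \<noteq> R j"
    using es_disjoint[OF i assms(2)] es_ends[OF i] es_ends[OF assms(2)] L_ne_R i assms(1,2)
    by auto
  then have "matching E ?N"
    using assms(3) unfolding crossing_def matching_def by auto
  moreover have "\<Union>?N = \<Union>{es ! i, es ! j}" using es_ends[OF i] es_ends[OF assms(2)] by auto
  ultimately have N: "?N = {es ! i, es ! j}" by (rule uniquely_restrictedD[OF ur])
  have "{L i, R j} \<notin> {es ! i, es ! j}"
    using ends_distinct es_ends[OF i] es_ends[OF assms(2)] by (simp add: doubleton_eq_iff)
  then show False unfolding N[symmetric] by simp
qed

lemma crossing_reduce:
  assumes "i < k" "k < j" "j < length es" "{L i, R j} \<in> E" "{L k, R i} \<in> E"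
  shows "crossing i k \<or> crossing k j"
proof -
  have k: "k < length es" using assms by simp
  have "R k \<noteq> R j" using es_disjoint[OF k assms(3)] es_ends[OF k] es_ends[OF assms(3)] assms(2)
    by auto
  then consider "(R k, R j) \<in> r" | "(R j, R k) \<in> r" using r_total r_field es_ends(2) k assms(3)
    by blast
  then show ?thesis
  proof cases
    case 1
    have "(L i, R k) \<in> r" using r_trans[OF L_mono es_ends(2)] assms(1) k by blast
    then have "{L i, R k} \<in> E"
      using edge_splits_left[OF _ 1 assms(4) es_ends(2) es_edge_ends] k by blast
    then show ?thesis using assms(5) unfolding crossing_def by blast
  next
    case 2
    have "(L k, R j) \<in> r" using r_trans[OF L_mono es_ends(2)] assms(2,3) by blast
    then have "{L k, R j} \<in> E"
      using edge_splits_left[OF _ 2 es_edge_ends es_ends(2) es_edge_ends] k assms(3) by blast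
    moreover have "(L j, R k) \<in> r" using r_trans[OF es_ends(2) 2] assms(3) by blast
    then have "{L j, R k} \<in> E"
      using edge_splits_right[OF L_mono _ es_edge_ends es_ends(2) es_edge_ends] k assms(2,3)
      by blast
    ultimately show ?thesis unfolding crossing_def by blast
  qed
qed

lemma crossing_consecutive:
  assumes "i < j" "j < length es" "crossing i j"
  shows "\<exists>c. Suc c < length es \<and> crossing c (Suc c)"
  using assms
proof (induction "j - i" arbitrary: i j rule: less_induct)
  case less
  show ?case
  proof (cases "j = Suc i")
    case True
    then show ?thesis using less.prems by blast
  next
    case False
    define k where "k = Suc i"
    have k: "i < k" "k < j" using less.prems(1) False unfolding k_def by auto
    have "(L k, R i) \<in> r"
      using r_trans[OF L_mono L_less_R_if_edge] k less.prems unfolding crossing_def by simp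
    then have "{L k, R i} \<in> E"
      using edge_splits_right[OF L_mono _ es_edge_ends es_ends(2) es_edge_ends] k less.prems(2)
      by simp
    moreover have "{L i, R j} \<in> E" using less.prems(3) unfolding crossing_def by simp
    ultimately have "crossing i k \<or> crossing k j" using crossing_reduce k less.prems(2) by blast
    moreover have "k - i < j - i" "j - k < j - i" using k by auto
    ultimately show ?thesis using less.hyps k less.prems(2) by (meson order.strict_trans)
  qed
qed

lemma crossing_consecutive_if_later_partners:
  assumes "k < j" "k < p" "j < length es" "p < length es" "{L k, R j} \<in> E" "{L p, R k} \<in> E"
  shows "\<exists>c. Suc c < length es \<and> crossing c (Suc c)"
proof -
  consider "j = p" | "j < p" | "p < j" by linarith
  then obtain a b where "a < b" "b < length es" "crossing a b"
  proof cases
    case 1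
    then show ?thesis using that assms unfolding crossing_def by blast
  next
    case 2
    have "(L j, R k) \<in> r" using r_trans[OF L_mono L_less_R_if_edge] 2 assms by simp
    then have "{L j, R k} \<in> E"
      using edge_splits_right[OF L_mono _ es_edge_ends es_ends(2) es_edge_ends] assms(1,3) by simp
    then show ?thesis using that assms(1,3,5) unfolding crossing_def by blast
  next
    case 3
    then show ?thesis using that crossing_reduce[OF assms(2) 3 assms(3,5,6)] assms by blast
  qed
  then show ?thesis using crossing_consecutive by blast
qed

lemma partner_in_later_edge:
  assumes M': "matching E M'" "\<Union>M' = \<Union>(set es)"
    and k: "k < length es" "es ! k \<notin> M'" "\<forall>i<k. es ! i \<in> M'"
    and x: "x \<in> es ! k"
  shows "\<exists>j y. k < j \<and> j < length es \<and> y \<in> es ! j \<and> {x, y} \<in> M'"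
proof -
  have "x \<in> \<Union>M'" using M'(2) k(1) x by auto
  then obtain f where f: "f \<in> M'" "x \<in> f" by blast
  then obtain u v where "f = {u, v}" "u \<noteq> v"
    using edge_doubleton matching_edges[OF M'(1)] by blast
  then obtain y where xy: "f = {x, y}" "x \<noteq> y" using f(2) by (auto simp: insert_commute)
  then have "y \<in> \<Union>(set es)" using M'(2) f(1) by blast
  then obtain j where j: "j < length es" "y \<in> es ! j" by (auto simp: in_set_conv_nth)
  have "j \<noteq> k"
  proof
    assume "j = k"
    then have "f = es ! k" using xy x j es_ends[OF k(1)] by auto
    then show False using f k by blast
  qed
  moreover have "\<not> j < k"
  proof
    assume "j < k"
    then have "es ! j \<in> M'" using k(3) by blast
    then have "es ! j = f" using matching_disjoint[OF M'(1) _ f(1)] j(2) xy(1) by blast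
    then show False using es_disjoint[OF j(1) k(1) \<open>j \<noteq> k\<close>] f(2) x by blast
  qed
  ultimately have "k < j" by linarith
  then show ?thesis using j f(1) xy(1) by blast
qed

lemma covering_matching_contains:
  assumes consecutive: "\<forall>c. Suc c < length es \<longrightarrow> uniquely_restricted E {es ! c, es ! Suc c}"
    and M': "matching E M'" "\<Union>M' = \<Union>(set es)"
  shows "set es \<subseteq> M'"
proof (rule ccontr)
  assume "\<not> set es \<subseteq> M'"
  then have "\<exists>k. k < length es \<and> es ! k \<notin> M'" by (auto simp: in_set_conv_nth)
  then obtain k where k: "k < length es" "es ! k \<notin> M'"
    and least: "\<forall>i<k. \<not> (i < length es \<and> es ! i \<notin> M')"
    unfolding exists_least_iff[of "\<lambda>k. k < length es \<and> es ! k \<notin> M'"] by blast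
  have "\<forall>i<k. es ! i \<in> M'" using least k(1) by auto
  note k = k this
  have M'E: "M' \<subseteq> E" using matching_edges[OF M'(1)] .
  obtain j y where j: "k < j" "j < length es" "y \<in> es ! j" "{L k, y} \<in> M'"
    using partner_in_later_edge[OF M' k, of "L k"] es_ends(1)[OF k(1)] by auto
  then have "y = R j" using no_edge_L_L[OF k(1) j(2)] es_ends(1)[OF j(2)] M'E by auto
  then have Lk: "{L k, R j} \<in> E" using j M'E by auto
  obtain p y' where p: "k < p" "p < length es" "y' \<in> es ! p" "{R k, y'} \<in> M'"
    using partner_in_later_edge[OF M' k, of "R k"] es_ends(1)[OF k(1)] by auto
  then have "y' = L p" using no_edge_R_R[OF k(1) p(2)] es_ends(1)[OF p(2)] M'E by auto
  then have Rk: "{L p, R k} \<in> E" using p M'E by (auto simp: insert_commute)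
  obtain c where "Suc c < length es" "crossing c (Suc c)"
    using crossing_consecutive_if_later_partners[OF j(1) p(1) j(2) p(2) Lk Rk] by blast
  then show False using crossing_not_uniquely_restricted[of c "Suc c"] consecutive by blast
qed

theorem uniquely_restricted_iff_consecutive:
  "uniquely_restricted E (set es) \<longleftrightarrow>
    (\<forall>i. i + 1 < length es \<longrightarrow> uniquely_restricted E {es ! i, es ! (i + 1)})"
proof
  assume ur: "uniquely_restricted E (set es)"
  show "\<forall>i. i + 1 < length es \<longrightarrow> uniquely_restricted E {es ! i, es ! (i + 1)}"
    using uniquely_restricted_subset[OF ur empty_not_edge] by simp
next
  assume "\<forall>i. i + 1 < length es \<longrightarrow> uniquely_restricted E {es ! i, es ! (i + 1)}"
  then have "M' = set es" if "matching E M'" "\<Union>M' = \<Union>(set es)" for M'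
    using matching_eq_if_subset[OF that(1) empty_not_edge covering_matching_contains that(2)]
      that by simp
  then show "uniquely_restricted E (set es)"
    using matching unfolding uniquely_restricted_def by blast
qed

end

theorem theorem6:
  fixes V :: "'a set" and E :: "'a set set" and r :: "'a rel" and es :: "'a set list"
  assumes "bipartite_permutation_graph V E"
    and "transitive_vertex_ordering V E r"
    and "matching E (set es)"
    and "sorted_wrt (\<lambda>e f. (lft r e, lft r f) \<in> r) es"
  shows "uniquely_restricted E (set es) \<longleftrightarrow>
    (\<forall>i. i + 1 < length es \<longrightarrow> uniquely_restricted E {es ! i, es ! (i + 1)})"
proof -
  interpret sorted_matching V E r es
    using assms by unfold_locales (auto simp: bipartite_permutation_graph_def)
  show ?thesis by (rule uniquely_restricted_iff_consecutive)
qed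

end
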